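(* For positive integers $n,m$, the ideal $I=(x_1,\dots,x_n)(x_{n+1},\dots,x_{n+m})\subset K[x_1,\dots,x_{n+m}]$ (the edge ideal of the complete bipartite graph $K_{n,m}$) has homological linear quotients with respect to the lexicographic order induced by any ordering of the variables: for every $k\ge0$ and every ordering of the variables, $\mathrm{HS}_k(I)$ has linear quotients with respect to the induced lexicographic order.
   Context: A monomial ideal has linear quotients with respect to a monomial order if listing its minimal generators decreasingly, $u_1,\dots,u_m$, every $(u_1,\dots,u_{i-1}):u_i$ is generated by variables. $\mathrm{HS}_k(I)$ is the monomial ideal generated by $\mathbf x^{\mathbf a}$ for the $k$th multigraded shifts $\mathbf a$ of $I$ in its minimal multigraded free resolution; the zero ideal is regarded as having linear quotients. *)

theory Defs
  imports Main
begin

text \<open>Monomials in the variables x_0, ..., x_(N-1) are represented by their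
exponent vectors (functions nat => nat vanishing from N on). Divisibility of
monomials is the pointwise order on such functions. A monomial ideal is
represented by the set of (exponent vectors of) monomials it contains.\<close>

type_synonym mon = "nat \<Rightarrow> nat"

definition monomials :: "nat \<Rightarrow> mon set" where
  "monomials N = {a. \<forall>j\<ge>N. a j = 0}"

definition mideal :: "nat \<Rightarrow> mon set \<Rightarrow> mon set" where
  "mideal N G = {a \<in> monomials N. \<exists>g\<in>G. g \<le> a}"

definition mingens :: "mon set \<Rightarrow> mon set" where
  "mingens M = {u \<in> M. \<forall>v\<in>M. v \<le> u \<longrightarrow> v = u}"

definition var_mon :: "nat \<Rightarrow> mon" where
  "var_mon s = (\<lambda>j. if j = s then 1 else 0)"

text \<open>Lexicographic order induced by the ordering of the variables
  x_(\<sigma> 0) > x_(\<sigma> 1) > ... > x_(\<sigma> (N-1)): lex_gt N \<sigma> a b means a > b.\<close>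
definition lex_gt :: "nat \<Rightarrow> (nat \<Rightarrow> nat) \<Rightarrow> mon \<Rightarrow> mon \<Rightarrow> bool" where
  "lex_gt N \<sigma> a b \<longleftrightarrow>
     (\<exists>k<N. b (\<sigma> k) < a (\<sigma> k) \<and> (\<forall>i<k. a (\<sigma> i) = b (\<sigma> i)))"

definition mcolon :: "nat \<Rightarrow> mon set \<Rightarrow> mon \<Rightarrow> mon set" where
  "mcolon N M u = {w \<in> monomials N. (\<lambda>j. w j + u j) \<in> M}"

definition generated_by_variables :: "nat \<Rightarrow> mon set \<Rightarrow> bool" where
  "generated_by_variables N M \<longleftrightarrow> (\<exists>S\<subseteq>{..<N}. M = mideal N (var_mon ` S))"

definition has_linear_quotients :: "nat \<Rightarrow> (nat \<Rightarrow> nat) \<Rightarrow> mon set \<Rightarrow> bool" where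
  "has_linear_quotients N \<sigma> M \<longleftrightarrow>
     (\<forall>u\<in>mingens M.
        generated_by_variables N
          (mcolon N (mideal N {v \<in> mingens M. lex_gt N \<sigma> v u}) u))"

text \<open>Multidegree-a strand of the Koszul complex K(x) \<otimes> I (computing
  Tor_i(K, I)_a): basis in homological degree i given by the subsets F of the
  variables with |F| = i and x^(a - F) \<in> I.\<close>
definition kface :: "nat \<Rightarrow> mon set \<Rightarrow> mon \<Rightarrow> nat set \<Rightarrow> bool" where
  "kface N M a F \<longleftrightarrow> F \<subseteq> {..<N} \<and> (\<forall>j\<in>F. 1 \<le> a j) \<and>
     (\<lambda>j. a j - (if j \<in> F then 1 else 0)) \<in> M"

definition kchains :: "'k itself \<Rightarrow> nat \<Rightarrow> mon set \<Rightarrow> mon \<Rightarrow> nat \<Rightarrow> (nat set \<Rightarrow> 'k::comm_ring_1) set" where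
  "kchains _ N M a i = {c. \<forall>F. c F \<noteq> 0 \<longrightarrow> kface N M a F \<and> card F = i}"

text \<open>Koszul differential: e_F \<mapsto> \<Sum>_(j\<in>F) (-1)^|{l\<in>F. l<j}| x_j e_(F-{j}).\<close>
definition kbd :: "nat \<Rightarrow> (nat set \<Rightarrow> 'k::comm_ring_1) \<Rightarrow> (nat set \<Rightarrow> 'k)" where
  "kbd N c = (\<lambda>G. \<Sum>j\<in>{..<N} - G. (-1) ^ card {l\<in>G. l < j} * c (insert j G))"

text \<open>The multigraded Betti number \<beta>_(i,a)(I) = dim_K Tor_i(K, I)_a is nonzero,
  i.e. a is an i-th multigraded shift of I in its minimal multigraded free
  resolution over K[x_0..x_(N-1)].\<close>
definition betti_nonzero :: "'k::field itself \<Rightarrow> nat \<Rightarrow> mon set \<Rightarrow> nat \<Rightarrow> mon \<Rightarrow> bool" where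
  "betti_nonzero K N M i a \<longleftrightarrow>
     (\<exists>z\<in>kchains K N M a i. kbd N z = (\<lambda>_. 0) \<and>
        \<not> (\<exists>w\<in>kchains K N M a (Suc i). kbd N w = z))"

definition HS :: "'k::field itself \<Rightarrow> nat \<Rightarrow> mon set \<Rightarrow> nat \<Rightarrow> mon set" where
  "HS K N M k = mideal N {a \<in> monomials N. betti_nonzero K N M k a}"

end

(* The edge ideal I of K_{n,m} is squarefree, and for a squarefree ideal wedging with e_c
   is a contracting homotopy of the multidegree-a strand of the Koszul complex computing
   Tor(K, I) as soon as a_c >= 2. So every multigraded shift is squarefree, a = x_U, and the
   strand has a basis of the faces F of U for which U - F still contains an edge of K_{n,m}.
   A k-th shift therefore has a face of size k, so U contains a set of size k + 2 meeting both
   sides of the bipartition. Conversely, for such a set U the signed sum of the e_(U - {p,q})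
   over its edges {p,q} is a cycle, and it is not a boundary because no face has size k + 1.
   Hence HS_k(I) is generated by these x_U. They have linear quotients for every lexicographic
   order by basis exchange: if x_V > x_U, the first variable x_t on which they differ lies in
   V - U, and trading it for a suitable s in U - V gives a generator larger than x_U that
   divides x_t x_U and still meets both sides. *)

theory Submission
  imports Defs "HOL-Library.Indicator_Function"
begin

section \<open>Monomial ideals\<close>

lemma var_mon_le_iff: "var_mon t \<le> w \<longleftrightarrow> 0 < w t"
  by (auto simp: var_mon_def le_fun_def)

lemma var_mon_in_monomials: "var_mon t \<in> monomials N \<longleftrightarrow> t < N"
  by (auto simp: var_mon_def monomials_def)

lemma indicator_in_monomials: "(indicator U :: mon) \<in> monomials N \<longleftrightarrow> U \<subseteq> {..<N}"
  unfolding monomials_def indicator_def by (auto, meson not_le)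

lemma indicator_le_indicator_iff: "(indicator U :: mon) \<le> indicator V \<longleftrightarrow> U \<subseteq> V"
  by (auto simp: le_fun_def indicator_def)

lemma mideal_eqI:
  assumes "G \<subseteq> B" and "\<And>b. b \<in> B \<Longrightarrow> \<exists>g\<in>G. g \<le> b"
  shows "mideal N B = mideal N G"
proof -
  have "\<exists>g\<in>G. g \<le> a" if "b \<in> B" "b \<le> a" for a b
    using assms(2)[OF that(1)] that(2) by (meson order_trans)
  then show ?thesis
    using assms(1) unfolding mideal_def by blast
qed

lemma mingens_mideal:
  assumes "G \<subseteq> monomials N"
    and antichain: "\<And>g h. g \<in> G \<Longrightarrow> h \<in> G \<Longrightarrow> g \<le> h \<Longrightarrow> g = h"
  shows "mingens (mideal N G) = G"
proof
  show "mingens (mideal N G) \<subseteq> G"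
  proof
    fix u assume u: "u \<in> mingens (mideal N G)"
    then obtain g where "g \<in> G" "g \<le> u"
      unfolding mingens_def mideal_def by blast
    moreover from \<open>g \<in> G\<close> have "g \<in> mideal N G"
      using assms(1) unfolding mideal_def by blast
    ultimately show "u \<in> G"
      using u unfolding mingens_def by blast
  qed
  show "G \<subseteq> mingens (mideal N G)"
  proof
    fix u assume u: "u \<in> G"
    have "v = u" if v: "v \<in> mideal N G" "v \<le> u" for v
    proof -
      obtain g where g: "g \<in> G" "g \<le> v"
        using v(1) unfolding mideal_def by blast
      then have "g = u"
        using antichain[OF g(1) u] v(2) by simp
      with g(2) v(2) show "v = u" by simp
    qed
    moreover have "u \<in> mideal N G"
      using u assms(1) unfolding mideal_def by blast
    ultimately show "u \<in> mingens (mideal N G)"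
      unfolding mingens_def by blast
  qed
qed

lemma mcolon_mideal_mono:
  assumes w: "w \<in> mcolon N (mideal N G) u" and "w \<le> w'" "w' \<in> monomials N"
    and u: "u \<in> monomials N"
  shows "w' \<in> mcolon N (mideal N G) u"
proof -
  from w obtain g where g: "g \<in> G" "g \<le> (\<lambda>j. w j + u j)"
    unfolding mcolon_def mideal_def by blast
  have "(\<lambda>j. w j + u j) \<le> (\<lambda>j. w' j + u j)"
    using \<open>w \<le> w'\<close> by (simp add: le_fun_def)
  with g(2) have "g \<le> (\<lambda>j. w' j + u j)"
    by (rule order_trans)
  moreover have "(\<lambda>j. w' j + u j) \<in> monomials N"
    using \<open>w' \<in> monomials N\<close> u by (simp add: monomials_def)
  ultimately show ?thesis
    using \<open>w' \<in> monomials N\<close> g(1) unfolding mcolon_def mideal_def by blast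
qed

lemma generated_by_variables_mcolon:
  assumes G: "G \<subseteq> monomials N" and u: "u \<in> monomials N"
    and exchange:
      "\<And>v. v \<in> G \<Longrightarrow> \<exists>t w. u t < v t \<and> w \<in> G \<and> w \<le> (\<lambda>j. var_mon t j + u j)"
  shows "generated_by_variables N (mcolon N (mideal N G) u)"
proof -
  define C where "C = mcolon N (mideal N G) u"
  define S where "S = {t. t < N \<and> var_mon t \<in> C}"
  have "C = mideal N (var_mon ` S)"
  proof
    show "mideal N (var_mon ` S) \<subseteq> C"
      using mcolon_mideal_mono[OF _ _ _ u] unfolding C_def S_def mideal_def by blast
    show "C \<subseteq> mideal N (var_mon ` S)"
    proof
      fix w assume "w \<in> C"
      then obtain v where w: "w \<in> monomials N" "v \<in> G" "v \<le> (\<lambda>j. w j + u j)"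
        unfolding C_def mcolon_def mideal_def by blast
      obtain t w0 where t: "u t < v t" "w0 \<in> G" "w0 \<le> (\<lambda>j. var_mon t j + u j)"
        using exchange[OF w(2)] by blast
      have "t < N"
      proof (rule ccontr)
        assume "\<not> t < N"
        then have "v t = 0"
          using w(2) G by (auto simp: monomials_def)
        with t(1) show False by simp
      qed
      have "v t \<le> w t + u t"
        using w(3) by (simp add: le_fun_def)
      with t(1) have "var_mon t \<le> w"
        by (simp add: var_mon_le_iff)
      moreover have "(\<lambda>j. var_mon t j + u j) \<in> monomials N"
        using u \<open>t < N\<close> by (auto simp: monomials_def var_mon_def)
      then have "var_mon t \<in> C"
        using t(2,3) \<open>t < N\<close> var_mon_in_monomials
        unfolding C_def mcolon_def mideal_def by blast
      ultimately show "w \<in> mideal N (var_mon ` S)"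
        using \<open>t < N\<close> w(1) unfolding S_def mideal_def by blast
    qed
  qed
  moreover have "S \<subseteq> {..<N}"
    unfolding S_def by auto
  ultimately show ?thesis
    unfolding generated_by_variables_def C_def[symmetric] by blast
qed

lemma lex_gt_indicator_exchange:
  assumes "lex_gt N \<sigma> (indicator V) (indicator U :: mon)"
  obtains t where "t \<in> V - U"
    and "\<And>s. s \<in> U - V \<Longrightarrow> lex_gt N \<sigma> (indicator (insert t (U - {s}))) (indicator U :: mon)"
proof -
  from assms obtain k where k: "k < N" "indicator U (\<sigma> k) < (indicator V (\<sigma> k) :: nat)"
    and before: "\<forall>i<k. indicator V (\<sigma> i) = (indicator U (\<sigma> i) :: nat)"
    unfolding lex_gt_def by blast
  have "\<sigma> k \<in> V - U"
    using k(2) by (auto simp: indicator_def)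
  moreover have "lex_gt N \<sigma> (indicator (insert (\<sigma> k) (U - {s}))) (indicator U :: mon)"
    if "s \<in> U - V" for s
    unfolding lex_gt_def
  proof (intro exI[of _ k] conjI allI impI)
    show "k < N" by (fact k(1))
    show "indicator U (\<sigma> k) < (indicator (insert (\<sigma> k) (U - {s})) (\<sigma> k) :: nat)"
      using \<open>\<sigma> k \<in> V - U\<close> by simp
  next
    fix i assume "i < k"
    then have "\<sigma> i \<noteq> \<sigma> k" "\<sigma> i \<noteq> s"
      using before \<open>\<sigma> k \<in> V - U\<close> that by (auto simp: indicator_def)
    then show "indicator (insert (\<sigma> k) (U - {s})) (\<sigma> i) = (indicator U (\<sigma> i) :: nat)"
      by (simp add: indicator_def)
  qed
  ultimately show thesis
    using that by blast
qed

section \<open>Strands of the Koszul complex\<close>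

definition koszul_sign :: "nat set \<Rightarrow> nat \<Rightarrow> 'k::comm_ring_1" where
  "koszul_sign G j = (-1) ^ card {l\<in>G. l < j}"

lemma kbd_koszul_sign: "kbd N c G = (\<Sum>j\<in>{..<N} - G. koszul_sign G j * c (insert j G))"
  unfolding kbd_def koszul_sign_def ..

lemma koszul_sign_square: "koszul_sign G j * koszul_sign G j = (1::'k::comm_ring_1)"
  unfolding koszul_sign_def by (simp flip: power_mult_distrib)

lemma koszul_sign_nonzero: "koszul_sign G j \<noteq> (0::'k::comm_ring_1)"
  using koszul_sign_square[of G j] by (metis mult_zero_left zero_neq_one)

lemma koszul_sign_insert:
  assumes "x \<notin> G"
  shows "koszul_sign (insert x G) j =
           (if x < j then - koszul_sign G j else (koszul_sign G j :: 'k::comm_ring_1))"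
proof -
  have "finite {l\<in>G. l < j}"
    by (rule finite_subset[of _ "{..<j}"]) auto
  moreover have "{l\<in>insert x G. l < j} = (if x < j then insert x {l\<in>G. l < j} else {l\<in>G. l < j})"
    by auto
  ultimately show ?thesis
    using assms by (simp add: koszul_sign_def)
qed

text \<open>Left multiplication by the exterior generator e_c.\<close>
definition kwedge :: "nat \<Rightarrow> (nat set \<Rightarrow> 'k::comm_ring_1) \<Rightarrow> nat set \<Rightarrow> 'k" where
  "kwedge c z F = (if c \<in> F then koszul_sign (F - {c}) c * z (F - {c}) else 0)"

lemma kbd_kwedge_not_mem:
  fixes z :: "nat set \<Rightarrow> 'k::comm_ring_1"
  assumes c: "c < N" "c \<notin> G"
  shows "kbd N (kwedge c z) G = z G"
proof -
  have "kbd N (kwedge c z) G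
      = (\<Sum>j\<in>{..<N} - G. if j = c then koszul_sign G c * (koszul_sign G c * z G) else 0)"
    unfolding kbd_koszul_sign using c(2) by (intro sum.cong) (auto simp: kwedge_def)
  also have "\<dots> = koszul_sign G c * koszul_sign G c * z G"
    using c by simp
  finally show ?thesis
    by (simp add: koszul_sign_square)
qed

lemma kbd_kwedge:
  fixes z :: "nat set \<Rightarrow> 'k::comm_ring_1"
  assumes c: "c < N" and cycle: "kbd N z = (\<lambda>_. 0)"
  shows "kbd N (kwedge c z) = z"
proof
  fix G
  show "kbd N (kwedge c z) G = z G"
  proof (cases "c \<in> G")
    case False
    with c show ?thesis
      by (rule kbd_kwedge_not_mem)
  next
    case True
    define H where "H = G - {c}"
    have G: "G = insert c H" "c \<notin> H"
      using True unfolding H_def by auto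
    have split: "{..<N} - H = insert c ({..<N} - G)" "c \<notin> {..<N} - G"
      using c G by auto
    have "kbd N z H = 0"
      using cycle by simp
    then have sum_eq:
        "(\<Sum>j\<in>{..<N} - G. koszul_sign H j * z (insert j H)) = - (koszul_sign H c * z G)"
      unfolding kbd_koszul_sign split using split(2) G(1)
      by (simp add: eq_neg_iff_add_eq_0 add.commute)
    have "kbd N (kwedge c z) G
        = (\<Sum>j\<in>{..<N} - G. - koszul_sign H c * (koszul_sign H j * z (insert j H)))"
      unfolding kbd_koszul_sign
    proof (intro sum.cong refl)
      fix j assume "j \<in> {..<N} - G"
      then have "j \<noteq> c" "j \<notin> H" "insert j G - {c} = insert j H"
        using G by auto
      then show "koszul_sign G j * kwedge c z (insert j G)
          = - koszul_sign H c * (koszul_sign H j * z (insert j H))"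
        unfolding kwedge_def using G by (cases "c < j") (auto simp: koszul_sign_insert)
    qed
    also have "\<dots> = - koszul_sign H c * (\<Sum>j\<in>{..<N} - G. koszul_sign H j * z (insert j H))"
      by (simp add: sum_distrib_left)
    also have "\<dots> = koszul_sign H c * koszul_sign H c * z G"
      unfolding sum_eq by simp
    finally show ?thesis
      by (simp add: koszul_sign_square)
  qed
qed

lemma zero_in_kchains: "(\<lambda>_. 0) \<in> kchains K N M a i"
  unfolding kchains_def by simp

lemma kbd_zero: "kbd N (\<lambda>_. 0::'k::comm_ring_1) = (\<lambda>_. 0)"
  unfolding kbd_def by simp

lemma kchains_without_kfaces:
  assumes "\<And>F. kface N M a F \<Longrightarrow> card F \<noteq> i"
  shows "kchains K N M a i = {\<lambda>_. 0}"
proof -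
  have "c = (\<lambda>_. 0)" if "c \<in> kchains K N M a i" for c
  proof
    fix F
    show "c F = 0"
      using that assms unfolding kchains_def by blast
  qed
  then show ?thesis
    using zero_in_kchains by blast
qed

lemma betti_nonzero_imp_kface:
  assumes "betti_nonzero K N M i a"
  obtains F where "kface N M a F" "card F = i"
proof (rule ccontr)
  assume "\<not> thesis"
  then have "kchains K N M a i = {\<lambda>_. 0}"
    using that by (intro kchains_without_kfaces) blast
  moreover obtain z where "z \<in> kchains K N M a i"
    and not_boundary: "\<not> (\<exists>w\<in>kchains K N M a (Suc i). kbd N w = z)"
    using assms unfolding betti_nonzero_def by blast
  ultimately have "kbd N (\<lambda>_. 0) = z"
    by (auto simp: kbd_zero)
  with not_boundary show False
    using zero_in_kchains by blast
qed

lemma betti_nonzeroI: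
  assumes "z \<in> kchains K N M a i" "kbd N z = (\<lambda>_. 0)" "z \<noteq> (\<lambda>_. 0)"
    and "\<And>F. kface N M a F \<Longrightarrow> card F \<noteq> Suc i"
  shows "betti_nonzero K N M i a"
proof -
  have "kchains K N M a (Suc i) = {\<lambda>_. 0}"
    using assms(4) by (rule kchains_without_kfaces)
  then have "\<not> (\<exists>w\<in>kchains K N M a (Suc i). kbd N w = z)"
    using assms(3) kbd_zero by (metis singletonD)
  then show ?thesis
    using assms(1,2) unfolding betti_nonzero_def by blast
qed

text \<open>For a monomial ideal this says that it is squarefree.\<close>
definition support_determined :: "mon set \<Rightarrow> bool" where
  "support_determined M \<longleftrightarrow> (\<forall>a\<in>M. \<forall>b. (\<forall>j. a j = 0 \<longleftrightarrow> b j = 0) \<longrightarrow> b \<in> M)"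

lemma support_determinedD:
  assumes "support_determined M" "a \<in> M" "\<And>j. a j = 0 \<longleftrightarrow> b j = 0"
  shows "b \<in> M"
  using assms unfolding support_determined_def by blast

lemma kwedge_kchains:
  assumes M: "support_determined M" and c: "c < N" and ac: "2 \<le> a c"
    and z: "z \<in> kchains K N M a i"
  shows "kwedge c z \<in> kchains K N M a (Suc i)"
  unfolding kchains_def
proof (intro CollectI allI impI)
  fix F assume "kwedge c z F \<noteq> 0"
  then have cF: "c \<in> F" and "z (F - {c}) \<noteq> 0"
    by (auto simp: kwedge_def split: if_splits)
  with z have face: "kface N M a (F - {c})" and card: "card (F - {c}) = i"
    unfolding kchains_def by auto
  have F: "F \<subseteq> {..<N}"
    using face c unfolding kface_def by blast
  then have "card F = Suc i"
    using card cF by (metis card_Suc_Diff1 finite_lessThan finite_subset)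
  moreover have "\<forall>j\<in>F. 1 \<le> a j"
  proof -
    have "\<forall>j\<in>F - {c}. 1 \<le> a j"
      using face unfolding kface_def by blast
    with ac show ?thesis by auto
  qed
  moreover have "(\<lambda>j. a j - (if j \<in> F then 1 else 0)) \<in> M"
  proof (rule support_determinedD[OF M])
    show "(\<lambda>j. a j - (if j \<in> F - {c} then 1 else 0)) \<in> M"
      using face unfolding kface_def by blast
    show "a j - (if j \<in> F - {c} then 1 else 0) = 0 \<longleftrightarrow> a j - (if j \<in> F then 1 else 0) = 0"
      for j
      using ac cF by (cases "j = c") auto
  qed
  ultimately show "kface N M a F \<and> card F = Suc i"
    using F unfolding kface_def by blast
qed

lemma betti_nonzero_squarefree:
  assumes M: "support_determined M" and a: "a \<in> monomials N"
    and betti: "betti_nonzero K N M i a"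
  shows "a c \<le> 1"
proof (rule ccontr)
  assume "\<not> a c \<le> 1"
  then have ac: "2 \<le> a c" by simp
  have c: "c < N"
  proof (rule ccontr)
    assume "\<not> c < N"
    with a have "a c = 0"
      unfolding monomials_def by simp
    with ac show False by simp
  qed
  from betti obtain z where z: "z \<in> kchains K N M a i" "kbd N z = (\<lambda>_. 0)"
    and not_boundary: "\<not> (\<exists>w\<in>kchains K N M a (Suc i). kbd N w = z)"
    unfolding betti_nonzero_def by blast
  then show False
    using kwedge_kchains[OF M c ac z(1)] kbd_kwedge[OF c z(2)] by blast
qed

section \<open>The edge ideal of the complete bipartite graph\<close>

abbreviation bipartite_ideal :: "nat \<Rightarrow> nat \<Rightarrow> mon set" where
  "bipartite_ideal n m \<equiv>
     mideal (n+m) {(\<lambda>l. var_mon i l + var_mon j l) | i j. i < n \<and> n \<le> j \<and> j < n+m}"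

lemma mem_bipartite_ideal:
  "b \<in> bipartite_ideal n m \<longleftrightarrow>
     b \<in> monomials (n+m) \<and> (\<exists>i<n. 0 < b i) \<and> (\<exists>j. n \<le> j \<and> j < n+m \<and> 0 < b j)"
proof
  assume "b \<in> bipartite_ideal n m"
  then obtain i j where b: "b \<in> monomials (n+m)" "i < n" "n \<le> j" "j < n+m"
    and le: "(\<lambda>l. var_mon i l + var_mon j l) \<le> b"
    unfolding mideal_def by blast
  from le have "0 < b i" "0 < b j"
    by (auto simp: le_fun_def var_mon_def dest: spec[of _ i] spec[of _ j])
  with b show "b \<in> monomials (n+m) \<and> (\<exists>i<n. 0 < b i) \<and> (\<exists>j. n \<le> j \<and> j < n+m \<and> 0 < b j)"
    by blast
next
  assume "b \<in> monomials (n+m) \<and> (\<exists>i<n. 0 < b i) \<and> (\<exists>j. n \<le> j \<and> j < n+m \<and> 0 < b j)"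
  then obtain i j where b: "b \<in> monomials (n+m)" "i < n" "n \<le> j" "j < n+m" "0 < b i" "0 < b j"
    by blast
  then have "(\<lambda>l. var_mon i l + var_mon j l) \<le> b"
    by (auto simp: le_fun_def var_mon_def)
  with b show "b \<in> bipartite_ideal n m"
    unfolding mideal_def by blast
qed

lemma support_determined_bipartite_ideal: "support_determined (bipartite_ideal n m)"
  unfolding support_determined_def
  by (auto simp: mem_bipartite_ideal monomials_def) (metis neq0_conv)+

lemma kface_bipartite_indicator:
  assumes "U \<subseteq> {..<n+m}"
  shows "kface (n+m) (bipartite_ideal n m) (indicator U) F \<longleftrightarrow>
           F \<subseteq> U \<and> (\<exists>p\<in>U - F. p < n) \<and> (\<exists>q\<in>U - F. n \<le> q)"
proof -
  have "(\<forall>j\<in>F. 1 \<le> (indicator U j :: nat)) \<longleftrightarrow> F \<subseteq> U"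
    by (auto simp: indicator_def)
  moreover have "(\<lambda>j. indicator U j - (if j \<in> F then 1 else 0)) = (indicator (U - F) :: mon)"
    if "F \<subseteq> U"
    using that by (auto simp: indicator_def)
  moreover have "indicator (U - F) \<in> bipartite_ideal n m \<longleftrightarrow>
      (\<exists>p\<in>U - F. p < n) \<and> (\<exists>q\<in>U - F. n \<le> q)"
    using assms by (auto simp: mem_bipartite_ideal indicator_in_monomials indicator_def)
  ultimately show ?thesis
    using assms unfolding kface_def by auto
qed

definition crossing_sets :: "nat \<Rightarrow> nat \<Rightarrow> nat \<Rightarrow> nat set set" where
  "crossing_sets n m k =
     {U. U \<subseteq> {..<n+m} \<and> card U = k + 2 \<and> (\<exists>p\<in>U. p < n) \<and> (\<exists>q\<in>U. n \<le> q)}"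

lemma betti_nonzero_bipartite_ideal_imp_crossing_set:
  assumes a: "a \<in> monomials (n+m)"
    and betti: "betti_nonzero K (n+m) (bipartite_ideal n m) k a"
  obtains U where "U \<in> crossing_sets n m k" "indicator U \<le> a"
proof -
  define A where "A = {j. 0 < a j}"
  have "a c \<le> 1" for c
    using betti_nonzero_squarefree[OF support_determined_bipartite_ideal a betti] .
  then have a_eq: "a = indicator A"
    unfolding A_def indicator_def by (force simp: le_Suc_eq)
  have A: "A \<subseteq> {..<n+m}"
    using a indicator_in_monomials unfolding a_eq by blast
  obtain F where F: "kface (n+m) (bipartite_ideal n m) a F" "card F = k"
    using betti by (rule betti_nonzero_imp_kface)
  then obtain p q where "F \<subseteq> A" "p \<in> A - F" "p < n" "q \<in> A - F" "n \<le> q"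
    unfolding a_eq kface_bipartite_indicator[OF A] by blast
  moreover have "finite F"
    using \<open>F \<subseteq> A\<close> A by (meson finite_lessThan finite_subset)
  ultimately have "insert p (insert q F) \<in> crossing_sets n m k"
    using A F(2) unfolding crossing_sets_def by auto
  moreover have "indicator (insert p (insert q F)) \<le> a"
    unfolding a_eq indicator_le_indicator_iff
    using \<open>F \<subseteq> A\<close> \<open>p \<in> A - F\<close> \<open>q \<in> A - F\<close> by blast
  ultimately show thesis
    using that by blast
qed

text \<open>Up to sign, the sum of the e_(U - {p, q}) over the edges {p, q} of K_{n,m} inside U.\<close>
definition crossing_cycle :: "nat \<Rightarrow> nat set \<Rightarrow> nat set \<Rightarrow> 'k::comm_ring_1" where
  "crossing_cycle n U F =
     (if F \<subseteq> U \<and> card (U - F) = 2 \<and> (\<exists>p\<in>U - F. p < n) \<and> (\<exists>q\<in>U - F. n \<le> q)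
      then \<Prod>x\<in>U - F. koszul_sign U x else 0)"

lemma card_3_sorted:
  assumes "card (R::nat set) = 3"
  obtains a b c where "R = {a, b, c}" "a < b" "b < c"
proof -
  have "finite R"
    using assms by (metis card.infinite zero_neq_numeral)
  then have "set (sorted_list_of_set R) = R" "sorted_wrt (<) (sorted_list_of_set R)"
    "length (sorted_list_of_set R) = 3"
    using assms by auto
  moreover obtain a b c where "sorted_list_of_set R = [a, b, c]"
    using \<open>length (sorted_list_of_set R) = 3\<close>
    by (metis length_0_conv length_Suc_conv numeral_3_eq_3)
  ultimately show thesis
    using that by auto
qed

text \<open>Since the left side {..<n} is an initial segment, a triple a < b < c either lies on one
  side, or {a, c} is an edge together with exactly one of {a, b} and {b, c}; these two terms
  cancel.\<close>
lemma kbd_crossing_cycle_triple: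
  assumes abc: "a < b" "b < c" and G: "a \<notin> G" "b \<notin> G" "c \<notin> G"
    and U: "U = insert a (insert b (insert c G))"
  shows "(\<Sum>j\<in>{a, b, c}. koszul_sign G j * crossing_cycle n U (insert j G)) = (0::'k::comm_ring_1)"
proof -
  have diffs: "U - insert a G = {b, c}" "U - insert b G = {a, c}" "U - insert c G = {a, b}"
    using U abc G by auto
  have signs: "koszul_sign U a = (koszul_sign G a :: 'k)" "koszul_sign U b = - (koszul_sign G b :: 'k)"
    "koszul_sign U c = (koszul_sign G c :: 'k)"
    using U abc G by (simp_all add: koszul_sign_insert)
  have subsets: "insert a G \<subseteq> U" "insert b G \<subseteq> U" "insert c G \<subseteq> U"
    using U by auto
  have "crossing_cycle n U (insert a G)
      = (if (b < n \<or> c < n) \<and> (n \<le> b \<or> n \<le> c) then koszul_sign U b * koszul_sign U c else (0::'k))"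
    "crossing_cycle n U (insert b G)
      = (if (a < n \<or> c < n) \<and> (n \<le> a \<or> n \<le> c) then koszul_sign U a * koszul_sign U c else (0::'k))"
    "crossing_cycle n U (insert c G)
      = (if (a < n \<or> b < n) \<and> (n \<le> a \<or> n \<le> b) then koszul_sign U a * koszul_sign U b else (0::'k))"
    using abc unfolding crossing_cycle_def diffs by (simp_all only: subsets) auto
  then show ?thesis
    using abc unfolding signs
    by (cases "c < n"; cases "b < n"; cases "a < n") (simp_all add: algebra_simps)
qed

lemma kbd_crossing_cycle_eq_sum:
  assumes "U \<subseteq> {..<N}" "G \<subseteq> U"
  shows "kbd N (crossing_cycle n U) G =
           (\<Sum>j\<in>U - G. koszul_sign G j * (crossing_cycle n U (insert j G) :: 'k::comm_ring_1))"
  unfolding kbd_koszul_sign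
proof (rule sum.mono_neutral_right)
  show "U - G \<subseteq> {..<N} - G"
    using assms(1) by blast
  show "\<forall>j\<in>{..<N} - G - (U - G). koszul_sign G j * (crossing_cycle n U (insert j G) :: 'k) = 0"
    unfolding crossing_cycle_def by auto
qed simp

lemma kbd_crossing_cycle:
  assumes U: "finite U" "U \<subseteq> {..<N}"
  shows "kbd N (crossing_cycle n U :: nat set \<Rightarrow> 'k::comm_ring_1) = (\<lambda>_. 0)"
proof
  fix G
  define f :: "nat \<Rightarrow> 'k" where "f j = koszul_sign G j * crossing_cycle n U (insert j G)" for j
  show "kbd N (crossing_cycle n U) G = (0::'k)"
  proof (cases "G \<subseteq> U")
    case False
    then show ?thesis
      unfolding kbd_koszul_sign crossing_cycle_def by (intro sum.neutral) auto
  next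
    case True
    define R where "R = U - G"
    have "finite R"
      using U(1) unfolding R_def by simp
    have "kbd N (crossing_cycle n U) G = sum f R"
      unfolding f_def R_def using U(2) True by (rule kbd_crossing_cycle_eq_sum)
    also have "\<dots> = 0"
    proof (cases "card R = 3")
      case True
      then obtain a b c where R: "R = {a, b, c}" "a < b" "b < c"
        by (rule card_3_sorted)
      then have "a \<notin> G" "b \<notin> G" "c \<notin> G" "U = insert a (insert b (insert c G))"
        using \<open>G \<subseteq> U\<close> unfolding R_def by auto
      then show ?thesis
        unfolding R f_def by (rule kbd_crossing_cycle_triple[OF R(2,3)])
    next
      case False
      have "f j = 0" if "j \<in> R" for j
      proof -
        have "U - insert j G = R - {j}"
          unfolding R_def by blast
        moreover have "card R = Suc (card (R - {j}))"
          using \<open>finite R\<close> that by (rule card.remove)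
        ultimately have "card (U - insert j G) \<noteq> 2"
          using False by simp
        then show ?thesis
          unfolding f_def crossing_cycle_def by simp
      qed
      then show ?thesis
        by simp
    qed
    finally show ?thesis .
  qed
qed

lemma crossing_cycle_kchains:
  assumes U: "U \<in> crossing_sets n m k"
  shows "crossing_cycle n U \<in> kchains K (n+m) (bipartite_ideal n m) (indicator U) k"
  unfolding kchains_def
proof (intro CollectI allI impI)
  from U have U_sub: "U \<subseteq> {..<n+m}" and card_U: "card U = k + 2"
    unfolding crossing_sets_def by auto
  then have "finite U"
    by (meson finite_lessThan finite_subset)
  fix F assume "crossing_cycle n U F \<noteq> 0"
  then have F: "F \<subseteq> U" "card (U - F) = 2" "\<exists>p\<in>U - F. p < n" "\<exists>q\<in>U - F. n \<le> q"
    unfolding crossing_cycle_def by (auto split: if_splits)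
  moreover have "card (U - F) = card U - card F"
    using F(1) \<open>finite U\<close> by (meson card_Diff_subset finite_subset)
  moreover have "card F \<le> card U"
    using F(1) \<open>finite U\<close> by (rule card_mono[rotated])
  ultimately have "card F = k"
    using card_U by linarith
  with F show "kface (n+m) (bipartite_ideal n m) (indicator U) F \<and> card F = k"
    using kface_bipartite_indicator[OF U_sub] by blast
qed

lemma card_kface_bipartite_indicator:
  assumes U: "U \<subseteq> {..<n+m}" and F: "kface (n+m) (bipartite_ideal n m) (indicator U) F"
  shows "card F + 2 \<le> card U"
proof -
  from F obtain p q where F_sub: "F \<subseteq> U - {p, q}" and pq: "p \<in> U" "q \<in> U" "p < n" "n \<le> q"
    unfolding kface_bipartite_indicator[OF U] by blast
  have "finite U"
    using U by (meson finite_lessThan finite_subset)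
  have "card F \<le> card (U - {p, q})"
    using F_sub \<open>finite U\<close> by (intro card_mono) auto
  also have "\<dots> = card U - 2"
    using pq by (simp add: card_Diff_subset)
  finally show ?thesis
    using pq \<open>finite U\<close> card_mono[of U "{p, q}"] by simp
qed

lemma betti_nonzero_crossing_set:
  fixes K :: "'k::field itself"
  assumes U: "U \<in> crossing_sets n m k"
  shows "betti_nonzero K (n+m) (bipartite_ideal n m) k (indicator U)"
proof -
  from U obtain p q where U_sub: "U \<subseteq> {..<n+m}" and card_U: "card U = k + 2"
    and pq: "p \<in> U" "p < n" "q \<in> U" "n \<le> q"
    unfolding crossing_sets_def by blast
  define z :: "nat set \<Rightarrow> 'k" where "z = crossing_cycle n U"
  show ?thesis
  proof (rule betti_nonzeroI)
    show "z \<in> kchains K (n+m) (bipartite_ideal n m) (indicator U) k"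
      unfolding z_def using U by (rule crossing_cycle_kchains)
    show "kbd (n+m) z = (\<lambda>_. 0)"
      unfolding z_def using U_sub by (intro kbd_crossing_cycle) (auto intro: finite_subset)
    have "U - (U - {p, q}) = {p, q}"
      using pq by auto
    then have "z (U - {p, q}) = koszul_sign U p * koszul_sign U q"
      unfolding z_def crossing_cycle_def using pq by auto
    then show "z \<noteq> (\<lambda>_. 0)"
      by (metis koszul_sign_nonzero no_zero_divisors)
    show "card F \<noteq> Suc k" if "kface (n+m) (bipartite_ideal n m) (indicator U) F" for F
      using card_kface_bipartite_indicator[OF U_sub that] card_U by simp
  qed
qed

lemma indicator_crossing_sets_monomials:
  "(indicator ` crossing_sets n m k :: mon set) \<subseteq> monomials (n+m)"
  using indicator_in_monomials unfolding crossing_sets_def by blast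

lemma HS_bipartite_ideal:
  "HS K (n+m) (bipartite_ideal n m) k = mideal (n+m) (indicator ` crossing_sets n m k)"
  unfolding HS_def
proof (rule mideal_eqI)
  show "indicator ` crossing_sets n m k
      \<subseteq> {a \<in> monomials (n+m). betti_nonzero K (n+m) (bipartite_ideal n m) k a}"
    using indicator_crossing_sets_monomials betti_nonzero_crossing_set[where K = K] by blast
  show "\<exists>g\<in>indicator ` crossing_sets n m k. g \<le> a"
    if "a \<in> {a \<in> monomials (n+m). betti_nonzero K (n+m) (bipartite_ideal n m) k a}" for a
  proof -
    from that have "a \<in> monomials (n+m)" "betti_nonzero K (n+m) (bipartite_ideal n m) k a"
      by auto
    then obtain U where "U \<in> crossing_sets n m k" "indicator U \<le> a"
      by (rule betti_nonzero_bipartite_ideal_imp_crossing_set)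
    then show ?thesis
      by blast
  qed
qed

lemma indicator_crossing_sets_antichain:
  fixes g h :: mon
  assumes "g \<in> indicator ` crossing_sets n m k" "h \<in> indicator ` crossing_sets n m k" "g \<le> h"
  shows "g = h"
proof -
  from assms(1,2) obtain U V where UV: "U \<in> crossing_sets n m k" "V \<in> crossing_sets n m k"
    and gh: "g = indicator U" "h = indicator V"
    by blast
  moreover have "U \<subseteq> V"
    using assms(3) indicator_le_indicator_iff[of U V] unfolding gh by blast
  moreover have "finite V" "card U = card V"
    using UV finite_subset[of V "{..<n+m}"] unfolding crossing_sets_def by auto
  ultimately have "U = V"
    by (simp add: card_subset_eq)
  with gh show ?thesis
    by simp
qed

lemma exchange_keeping_element:
  assumes "finite U" "finite V" "card U = card V"
    and t: "t \<in> V - U" "\<not> Q t" and QU: "\<exists>q\<in>U. Q q" and QV: "\<exists>q\<in>V. Q q"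
  obtains s where "s \<in> U - V" "\<exists>q\<in>U - {s}. Q q"
proof -
  have card_eq: "card (U - V) = card (V - U)"
    using assms(1-3) by (simp add: card_Diff_subset_Int Int_commute)
  show thesis
  proof (cases "\<exists>q\<in>U \<inter> V. Q q")
    case True
    have "card (V - U) \<noteq> 0"
      using t(1) assms(2) by auto
    then have "U - V \<noteq> {}"
      using card_eq by (metis card.empty)
    then obtain s where "s \<in> U - V" by blast
    with True show thesis
      using that by blast
  next
    case False
    then obtain q q' where q: "q \<in> U - V" "Q q" and q': "q' \<in> V - U" "Q q'"
      using QU QV by blast
    have "2 \<le> card (V - U)"
    proof -
      have "{t, q'} \<subseteq> V - U" "t \<noteq> q'"
        using t q' by auto
      then show ?thesis
        using assms(2) card_mono[of "V - U" "{t, q'}"] by simp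
    qed
    then have "\<not> U - V \<subseteq> {q}"
      using card_eq card_mono[of "{q}" "U - V"] by auto
    then obtain s where "s \<in> U - V" "s \<noteq> q"
      by blast
    with q show thesis
      using that by blast
  qed
qed

lemma crossing_sets_exchange:
  assumes U: "U \<in> crossing_sets n m k" and V: "V \<in> crossing_sets n m k" and t: "t \<in> V - U"
  obtains s where "s \<in> U - V" "insert t (U - {s}) \<in> crossing_sets n m k"
proof -
  from U V have sub: "U \<subseteq> {..<n+m}" "V \<subseteq> {..<n+m}" and card: "card U = k + 2" "card V = k + 2"
    and sides: "\<exists>p\<in>U. p < n" "\<exists>q\<in>U. n \<le> q" "\<exists>p\<in>V. p < n" "\<exists>q\<in>V. n \<le> q"
    unfolding crossing_sets_def by auto
  have fin: "finite U" "finite V"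
    using sub finite_subset by auto
  have exchanged: "insert t (U - {s}) \<in> crossing_sets n m k"
    if "s \<in> U - V" "\<exists>p\<in>insert t (U - {s}). p < n" "\<exists>q\<in>insert t (U - {s}). n \<le> q" for s
  proof -
    have "card U = Suc (card (U - {s}))"
      using that(1) by (intro card.remove[OF fin(1)]) blast
    moreover have "card (insert t (U - {s})) = Suc (card (U - {s}))"
      using fin(1) t by simp
    moreover have "insert t (U - {s}) \<subseteq> {..<n+m}"
      using sub t by auto
    ultimately show ?thesis
      using card that(2,3) unfolding crossing_sets_def by simp
  qed
  show thesis
  proof (cases "t < n")
    case True
    obtain s where "s \<in> U - V" "\<exists>q\<in>U - {s}. n \<le> q"
      using exchange_keeping_element[of U V t "\<lambda>q. n \<le> q"] fin card t True sides by auto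
    with True show thesis
      using exchanged that by auto
  next
    case False
    obtain s where "s \<in> U - V" "\<exists>p\<in>U - {s}. p < n"
      using exchange_keeping_element[of U V t "\<lambda>p. p < n"] fin card t False sides by auto
    with False show thesis
      using exchanged that by (auto simp: not_less)
  qed
qed

lemma generated_by_variables_crossing_colon:
  fixes \<sigma> :: "nat \<Rightarrow> nat"
  assumes U: "U \<in> crossing_sets n m k"
  defines "G \<equiv> {v \<in> indicator ` crossing_sets n m k. lex_gt (n+m) \<sigma> v (indicator U)}"
  shows "generated_by_variables (n+m) (mcolon (n+m) (mideal (n+m) G) (indicator U))"
proof (rule generated_by_variables_mcolon)
  show "G \<subseteq> monomials (n+m)"
    unfolding G_def using indicator_crossing_sets_monomials by blast
  show "indicator U \<in> monomials (n+m)"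
    using U indicator_crossing_sets_monomials by blast
  fix v assume "v \<in> G"
  then obtain V where V: "V \<in> crossing_sets n m k" "v = indicator V"
    and lex: "lex_gt (n+m) \<sigma> (indicator V) (indicator U)"
    unfolding G_def by blast
  obtain t where t: "t \<in> V - U"
    and lex_exchanged: "\<And>s. s \<in> U - V \<Longrightarrow> lex_gt (n+m) \<sigma> (indicator (insert t (U - {s}))) (indicator U)"
    using lex_gt_indicator_exchange[OF lex] by blast
  obtain s where s: "s \<in> U - V" "insert t (U - {s}) \<in> crossing_sets n m k"
    using U V(1) t by (rule crossing_sets_exchange)
  have "indicator U t < v t"
    using t V(2) by simp
  moreover have "indicator (insert t (U - {s})) \<in> G"
    unfolding G_def using s lex_exchanged by blast
  moreover have "indicator (insert t (U - {s})) \<le> (\<lambda>j. var_mon t j + indicator U j)"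
    by (auto simp: le_fun_def indicator_def var_mon_def)
  ultimately show "\<exists>t w. indicator U t < v t \<and> w \<in> G \<and> w \<le> (\<lambda>j. var_mon t j + indicator U j)"
    by blast
qed

theorem mainTheorem8:
  fixes n m k :: nat and \<sigma> :: "nat \<Rightarrow> nat"
  assumes "0 < n" and "0 < m"
    and "bij_betw \<sigma> {..<n+m} {..<n+m}"
  shows "has_linear_quotients (n+m) \<sigma>
           (HS TYPE('k::field) (n+m)
              (mideal (n+m) {(\<lambda>l. var_mon i l + var_mon j l) | i j. i < n \<and> n \<le> j \<and> j < n+m})
              k)"
proof -
  have "mingens (mideal (n+m) (indicator ` crossing_sets n m k)) = indicator ` crossing_sets n m k"
    using indicator_crossing_sets_monomials
    by (rule mingens_mideal) (rule indicator_crossing_sets_antichain)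
  then show ?thesis
    unfolding has_linear_quotients_def HS_bipartite_ideal
    using generated_by_variables_crossing_colon by auto
qed

end
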